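(* Let $d\ge3$ be odd, $k\in\mathbb{Z}^+$, $\phi_{(d,k)}(x)=x^d+kdx^{d-1}-kd$, and $a=-k(d-1)$. Then $\phi_{(d,k)}^n(a)>0$ for all $n\ge1$.
   Context: $\phi^n$ denotes the $n$-fold iterate. *)

theory Defs
  imports Main
begin

definition phi :: "nat \<Rightarrow> int \<Rightarrow> int \<Rightarrow> int" where
  "phi d k x = x ^ d + k * int d * x ^ (d - 1) - k * int d"

end

theory Submission
  imports Defs
begin

text \<open>Write m = k(d - 1), so a = -m. Since d - 1 is even,
  phi(-m) = -m^d + k d m^(d-1) - k d = k (m^(d-1) - d), which is at least 1
  because m^(d-1) \<ge> (d - 1)^2 > d. On [1, \<infinity>) we have phi(x) \<ge> x, so every
  later iterate stays \<ge> 1.\<close>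

lemma funpow_ge_of_increasing_above:
  fixes f :: "'a::linorder \<Rightarrow> 'a"
  assumes "c \<le> f x" and "\<And>y. c \<le> y \<Longrightarrow> y \<le> f y"
  shows "c \<le> (f ^^ Suc n) x"
proof (induction n)
  case 0
  then show ?case using assms(1) by simp
next
  case (Suc n)
  then show ?case using assms(2) order_trans by fastforce
qed

lemma phi_ge_self:
  assumes "1 \<le> x" and "1 \<le> k" and "1 \<le> d"
  shows "x \<le> phi d k x"
proof -
  have "x ^ d + k * int d * x ^ (d - 1) = x ^ (d - 1) * (x + k * int d)"
    using \<open>1 \<le> d\<close> by (cases d) (simp_all add: algebra_simps)
  also have "\<dots> \<ge> 1 * (x + k * int d)"
    using assms by (intro mult_right_mono) simp_all
  finally show ?thesis unfolding phi_def by simp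
qed

lemma phi_minus_eq:
  assumes "odd d"
  shows "phi d k (- m) = (k * int d - m) * m ^ (d - 1) - k * int d"
proof -
  obtain j where "d = Suc (2 * j)" using assms oddE by (metis Suc_eq_plus1)
  then have "(- m) ^ (d - 1) = m ^ (d - 1)" and "(- m) ^ d = - m * m ^ (d - 1)"
    by (simp_all add: power_mult)
  then show ?thesis unfolding phi_def by (simp add: algebra_simps del: minus_mult_left)
qed

lemma phi_critical_ge_1:
  assumes "3 \<le> d" and "odd d" and "1 \<le> k"
  shows "1 \<le> phi d k (- k * (int d - 1))"
proof -
  define m where "m = k * (int d - 1)"
  have "int d + 1 \<le> (int d - 1) ^ 2"
    using \<open>3 \<le> d\<close> by (simp add: power2_eq_square algebra_simps)
  also have "\<dots> \<le> (int d - 1) ^ (d - 1)"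
    using \<open>3 \<le> d\<close> by (intro power_increasing) auto
  also have "\<dots> \<le> m ^ (d - 1)"
    using assms unfolding m_def by (intro power_mono) auto
  finally have "1 \<le> m ^ (d - 1) - int d" by simp
  then have "1 * 1 \<le> k * (m ^ (d - 1) - int d)"
    using \<open>1 \<le> k\<close> by (intro mult_mono) auto
  moreover have "phi d k (- m) = k * (m ^ (d - 1) - int d)"
    unfolding phi_minus_eq[OF \<open>odd d\<close>] by (simp add: m_def algebra_simps)
  ultimately show ?thesis by (simp add: m_def)
qed

theorem lemma3p3:
  fixes d :: nat and k :: int and n :: nat
  assumes "d \<ge> 3" and "odd d" and "k \<ge> 1" and "n \<ge> 1"
  shows "(phi d k ^^ n) (- k * (int d - 1)) > 0"
proof -
  obtain m where "n = Suc m" using \<open>n \<ge> 1\<close> by (cases n) auto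
  have "1 \<le> (phi d k ^^ Suc m) (- k * (int d - 1))"
  proof (rule funpow_ge_of_increasing_above)
    show "1 \<le> phi d k (- k * (int d - 1))"
      using phi_critical_ge_1 assms by blast
    show "\<And>y. 1 \<le> y \<Longrightarrow> y \<le> phi d k y"
      using phi_ge_self assms by simp
  qed
  then show ?thesis using \<open>n = Suc m\<close> by simp
qed

end
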